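(* If $A$ is an elementary abelian $p^n$-group of ppc-rank $r$, then there are exactly $r+1$ isomorphism classes of interchange rings $(A,+,\bullet)$ with additive group $(A,+)$ for which $(A,\bullet)$ is both commutative and associative.
   Context: For a prime $p$ and integers $n,r\ge1$, an elementary abelian $p^n$-group of ppc-rank $r$ is a direct sum of $r$ copies of the cyclic group of order $p^n$. An interchange ring is a triple $(A,+,\bullet)$ where $(A,+)$ is an abelian group and $\bullet$ is a binary operation satisfying $(w+x)\bullet(y+z) = (w\bullet y)+(x\bullet z)$ for all $w,x,y,z\in A$. An isomorphism of interchange rings is a bijection that is a homomorphism for both operations. *)

theory Defs
  imports "HOL-Algebra.Algebra" "HOL-Computational_Algebra.Primes"
begin

text \<open>An elementary abelian p^n-group of ppc-rank r: a group isomorphic to the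
  direct sum (= direct product, finitely many factors) of r copies of Z/p^n.
  The additive group is written in HOL-Algebra's multiplicative notation.\<close>
definition elem_abelian_ppc :: "('a, 'b) monoid_scheme \<Rightarrow> nat \<Rightarrow> nat \<Rightarrow> nat \<Rightarrow> bool" where
  "elem_abelian_ppc G p n r \<longleftrightarrow>
     comm_group G \<and> G \<cong> product_group {..<r} (\<lambda>_. integer_mod_group (p ^ n))"

definition interchange_op :: "('a, 'b) monoid_scheme \<Rightarrow> ('a \<Rightarrow> 'a \<Rightarrow> 'a) \<Rightarrow> bool" where
  "interchange_op G m \<longleftrightarrow>
     (\<forall>x\<in>carrier G. \<forall>y\<in>carrier G. m x y \<in> carrier G) \<and>
     (\<forall>w\<in>carrier G. \<forall>x\<in>carrier G. \<forall>y\<in>carrier G. \<forall>z\<in>carrier G.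
        m (w \<otimes>\<^bsub>G\<^esub> x) (y \<otimes>\<^bsub>G\<^esub> z) = m w y \<otimes>\<^bsub>G\<^esub> m x z)"

definition op_commutative :: "'a set \<Rightarrow> ('a \<Rightarrow> 'a \<Rightarrow> 'a) \<Rightarrow> bool" where
  "op_commutative A m \<longleftrightarrow> (\<forall>x\<in>A. \<forall>y\<in>A. m x y = m y x)"

definition op_associative :: "'a set \<Rightarrow> ('a \<Rightarrow> 'a \<Rightarrow> 'a) \<Rightarrow> bool" where
  "op_associative A m \<longleftrightarrow> (\<forall>x\<in>A. \<forall>y\<in>A. \<forall>z\<in>A. m (m x y) z = m x (m y z))"

definition interchange_iso :: "('a, 'b) monoid_scheme \<Rightarrow> ('a \<Rightarrow> 'a \<Rightarrow> 'a) \<Rightarrow> ('a \<Rightarrow> 'a \<Rightarrow> 'a) \<Rightarrow> bool" where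
  "interchange_iso G m m' \<longleftrightarrow>
     (\<exists>\<phi>. \<phi> \<in> iso G G \<and> (\<forall>x\<in>carrier G. \<forall>y\<in>carrier G. \<phi> (m x y) = m' (\<phi> x) (\<phi> y)))"

definition comm_assoc_interchange_ops :: "('a, 'b) monoid_scheme \<Rightarrow> ('a \<Rightarrow> 'a \<Rightarrow> 'a) set" where
  "comm_assoc_interchange_ops G =
     {m. interchange_op G m \<and> op_commutative (carrier G) m \<and> op_associative (carrier G) m}"

end

theory Submission
  imports Defs
begin

text \<open>
  A commutative associative interchange ring on an abelian group \<open>A\<close> is the same thing as an
  idempotent endomorphism \<open>e\<close> of \<open>A\<close>: the product is recovered as \<open>x \<bullet> y = e x + e y\<close> with
  \<open>e x = x \<bullet> 0\<close>, and isomorphisms of interchange rings are exactly the automorphisms conjugating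
  the idempotents. So we count conjugacy classes of idempotents of \<open>A = (\<int>/p\<^sup>n)\<^sup>r\<close>.

  We treat \<open>A\<close> as a group with a \<^emph>\<open>basis\<close> over \<open>\<int>/q\<close>, \<open>q = p\<^sup>n\<close>. The key fact is that every idempotent
  is \<^emph>\<open>diagonal\<close> in some basis (each basis vector is fixed or killed). It is proved by induction
  on the rank: since \<open>\<int>/p\<^sup>n\<close> is local, one of \<open>e(a\<^sub>j)\<close>, \<open>a\<^sub>j - e(a\<^sub>j)\<close> has a unit coordinate at \<open>j\<close>,
  so it can be exchanged into the basis; the \<open>j\<close>-th coordinate of \<open>e\<close> (or of the complementary
  idempotent) is then a unit functional whose kernel is \<open>e\<close>-invariant, has a basis of smaller
  rank, and splits off the new basis vector. A diagonal idempotent with \<open>s\<close> fixed vectors has an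
  image of size \<open>q\<^sup>s\<close>, and two of them with the same \<open>s\<close> are conjugate by a basis permutation.
  Hence the classes are indexed by \<open>s \<in> {0..r}\<close>, giving \<open>r + 1\<close> of them.
\<close>

definition lincomb :: "('a, 'b) monoid_scheme \<Rightarrow> (nat \<Rightarrow> 'a) \<Rightarrow> (nat \<Rightarrow> nat) \<Rightarrow> nat set \<Rightarrow> 'a" where
  "lincomb G b v I = finprod G (\<lambda>i. b i [^]\<^bsub>G\<^esub> v i) I"

text \<open>Coefficient vectors on \<open>I\<close> with entries in \<open>{..<q}\<close>, i.e.\ elements of \<open>(\<int>/q)\<^sup>I\<close>.\<close>
definition coeff_vectors :: "nat \<Rightarrow> nat set \<Rightarrow> (nat \<Rightarrow> nat) set" where
  "coeff_vectors q I = PiE I (\<lambda>_. {..<q})"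

text \<open>A basis of a group of exponent dividing \<open>q\<close>: every element is a unique linear combination
  with coefficients in \<open>{..<q}\<close>; i.e.\ the group is a free \<open>\<int>/q\<close>-module on \<open>b\<close>.\<close>
definition is_basis :: "('a, 'b) monoid_scheme \<Rightarrow> nat \<Rightarrow> (nat \<Rightarrow> 'a) \<Rightarrow> nat set \<Rightarrow> bool" where
  "is_basis G q b I \<longleftrightarrow> finite I \<and> b \<in> I \<rightarrow> carrier G \<and> (\<forall>y\<in>carrier G. y [^]\<^bsub>G\<^esub> q = \<one>\<^bsub>G\<^esub>)
     \<and> bij_betw (\<lambda>v. lincomb G b v I) (coeff_vectors q I) (carrier G)"

definition coords :: "('a, 'b) monoid_scheme \<Rightarrow> nat \<Rightarrow> (nat \<Rightarrow> 'a) \<Rightarrow> nat set \<Rightarrow> 'a \<Rightarrow> nat \<Rightarrow> nat" where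
  "coords G q b I y = inv_into (coeff_vectors q I) (\<lambda>v. lincomb G b v I) y"

lemma coeff_vectors_mod: "0 < q \<Longrightarrow> (\<lambda>i\<in>I. v i mod q) \<in> coeff_vectors q I"
  by (auto simp: coeff_vectors_def)

lemma coeff_vectors_eqI:
  "v \<in> coeff_vectors q I \<Longrightarrow> w \<in> coeff_vectors q I \<Longrightarrow> (\<And>i. i \<in> I \<Longrightarrow> v i = w i) \<Longrightarrow> v = w"
  by (auto simp: coeff_vectors_def PiE_iff intro: extensionalityI)

lemma card_coeff_vectors: "finite I \<Longrightarrow> card (coeff_vectors q I) = q ^ card I"
  by (simp add: coeff_vectors_def card_PiE)

context comm_group
begin

lemma lincomb_closed [simp]: "b \<in> I \<rightarrow> carrier G \<Longrightarrow> lincomb G b v I \<in> carrier G"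
  unfolding lincomb_def by (auto intro!: finprod_closed)

lemma lincomb_cong:
  assumes "\<And>i. i \<in> I \<Longrightarrow> v i = w i" "\<And>i. i \<in> I \<Longrightarrow> b i = c i" "c \<in> I \<rightarrow> carrier G"
  shows "lincomb G b v I = lincomb G c w I"
  unfolding lincomb_def using assms by (intro finprod_cong') auto

lemma lincomb_zero: "lincomb G b (\<lambda>i. 0) I = \<one>"
  unfolding lincomb_def by simp

lemma lincomb_mult:
  assumes "b \<in> I \<rightarrow> carrier G"
  shows "lincomb G b v I \<otimes> lincomb G b w I = lincomb G b (\<lambda>i. v i + w i) I"
proof -
  have "lincomb G b v I \<otimes> lincomb G b w I = finprod G (\<lambda>i. b i [^] v i \<otimes> b i [^] w i) I"
    unfolding lincomb_def using assms by (subst finprod_multf) auto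
  also have "\<dots> = lincomb G b (\<lambda>i. v i + w i) I"
    unfolding lincomb_def using assms by (intro finprod_cong') (auto simp: nat_pow_mult Pi_iff)
  finally show ?thesis .
qed

lemma lincomb_insert:
  assumes "finite I" "j \<notin> I" "b \<in> insert j I \<rightarrow> carrier G"
  shows "lincomb G b v (insert j I) = b j [^] v j \<otimes> lincomb G b v I"
  unfolding lincomb_def using assms by (subst finprod_insert) auto

lemma lincomb_insert_upd:
  assumes "finite J" "j \<notin> J" "b \<in> J \<rightarrow> carrier G" "x \<in> carrier G"
  shows "lincomb G (b(j := x)) (v(j := t)) (insert j J) = x [^] t \<otimes> lincomb G b v J"
proof -
  have bx: "b(j := x) \<in> insert j J \<rightarrow> carrier G" using assms(2-4) by auto
  have "lincomb G (b(j := x)) (v(j := t)) (insert j J) = x [^] t \<otimes> lincomb G (b(j := x)) (v(j := t)) J"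
    using lincomb_insert[OF assms(1,2) bx] by simp
  also have "lincomb G (b(j := x)) (v(j := t)) J = lincomb G b v J"
    using assms(2,3) by (intro lincomb_cong) auto
  finally show ?thesis .
qed

lemma lincomb_zero_out:
  assumes "finite I" "J \<subseteq> I" "\<And>i. i \<in> I - J \<Longrightarrow> v i = 0" "b \<in> I \<rightarrow> carrier G"
  shows "lincomb G b v I = lincomb G b v J"
proof -
  have "lincomb G b v I = finprod G (\<lambda>i. b i [^] v i) (J \<union> (I - J))"
    using assms(2) by (simp add: lincomb_def Un_absorb1)
  also have "\<dots> = lincomb G b v J \<otimes> finprod G (\<lambda>i. b i [^] v i) (I - J)"
    unfolding lincomb_def using assms by (subst finprod_Un_disjoint) (auto intro: finite_subset)
  also have "finprod G (\<lambda>i. b i [^] v i) (I - J) = \<one>"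
    using assms by (intro finprod_one_eqI) auto
  finally have "lincomb G b v I = lincomb G b v J \<otimes> \<one>" .
  moreover have "lincomb G b v J \<in> carrier G" using assms(2,4) by (intro lincomb_closed) auto
  ultimately show ?thesis by simp
qed

lemma lincomb_unit_vector:
  assumes "finite I" "j \<in> I" "b \<in> I \<rightarrow> carrier G"
  shows "lincomb G b (\<lambda>i. if i = j then 1 else 0) I = b j"
proof -
  have "lincomb G b (\<lambda>i. if i = j then 1 else 0) I = lincomb G b (\<lambda>i. if i = j then 1 else 0) {j}"
    using assms by (intro lincomb_zero_out) auto
  then show ?thesis using assms by (auto simp: lincomb_def Pi_iff)
qed

lemma pow_mod_exponent:
  assumes "x \<in> carrier G" "x [^] (q::nat) = \<one>"
  shows "x [^] (m::nat) = x [^] (m mod q)"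
proof -
  have "x [^] m = x [^] (q * (m div q) + m mod q)" by simp
  also have "\<dots> = (x [^] q) [^] (m div q) \<otimes> x [^] (m mod q)"
    using assms(1) by (simp only: nat_pow_mult nat_pow_pow)
  finally show ?thesis using assms by simp
qed

lemma lincomb_mod:
  assumes "\<And>i. i \<in> I \<Longrightarrow> b i [^] q = \<one>" "b \<in> I \<rightarrow> carrier G"
  shows "lincomb G b (\<lambda>i. v i mod q) I = lincomb G b v I"
  unfolding lincomb_def using assms by (intro finprod_cong') (auto simp: Pi_iff intro: pow_mod_exponent[symmetric])

lemma lincomb_hom:
  assumes "comm_group H" "h \<in> hom G H" "finite I" "b \<in> I \<rightarrow> carrier G"
  shows "h (lincomb G b v I) = lincomb H (\<lambda>i. h (b i)) v I"
  using assms(3,4)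
proof (induct I rule: finite_induct)
  case empty
  interpret H: comm_group H by fact
  interpret group_hom G H h using assms by (simp add: group_hom_def group_hom_axioms_def comm_group.axioms)
  show ?case by (simp add: lincomb_def)
next
  case (insert j I)
  interpret H: comm_group H by fact
  interpret group_hom G H h using assms by (simp add: group_hom_def group_hom_axioms_def comm_group.axioms)
  have "h (lincomb G b v (insert j I)) = h (b j [^] v j \<otimes> lincomb G b v I)"
    using insert by (subst lincomb_insert) auto
  also have "\<dots> = h (b j) [^]\<^bsub>H\<^esub> v j \<otimes>\<^bsub>H\<^esub> lincomb H (\<lambda>i. h (b i)) v I"
    using insert by (simp add: hom_nat_pow)
  also have "\<dots> = lincomb H (\<lambda>i. h (b i)) v (insert j I)"
    using insert by (subst H.lincomb_insert) (auto simp: Pi_iff)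
  finally show ?case .
qed

lemma subgroup_comm_group:
  assumes "subgroup K G"
  shows "comm_group (G\<lparr>carrier := K\<rparr>)"
proof (rule group.group_comm_groupI)
  show "group (G\<lparr>carrier := K\<rparr>)" using assms by (rule subgroup.subgroup_is_group) (rule is_group)
  show "x \<otimes>\<^bsub>G\<lparr>carrier := K\<rparr>\<^esub> y = y \<otimes>\<^bsub>G\<lparr>carrier := K\<rparr>\<^esub> x"
    if "x \<in> carrier (G\<lparr>carrier := K\<rparr>)" "y \<in> carrier (G\<lparr>carrier := K\<rparr>)" for x y
    using that subgroup.subset[OF assms] by (auto intro: m_comm)
qed

lemma lincomb_subgroup:
  assumes "subgroup K G" "finite I" "b \<in> I \<rightarrow> K"
  shows "lincomb (G\<lparr>carrier := K\<rparr>) b v I = lincomb G b v I"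
proof -
  have "id \<in> hom (G\<lparr>carrier := K\<rparr>) G"
    using subgroup.subset[OF assms(1)] by (auto simp: hom_def)
  from comm_group.lincomb_hom[OF subgroup_comm_group[OF assms(1)] comm_group_axioms this assms(2)]
  show ?thesis using assms(3) by (simp add: Pi_iff)
qed

lemma basis_finite: "is_basis G q b I \<Longrightarrow> finite I"
  and basis_closed: "is_basis G q b I \<Longrightarrow> b \<in> I \<rightarrow> carrier G"
  and basis_exponent: "is_basis G q b I \<Longrightarrow> y \<in> carrier G \<Longrightarrow> y [^] q = \<one>"
  and basis_bij: "is_basis G q b I \<Longrightarrow> bij_betw (\<lambda>v. lincomb G b v I) (coeff_vectors q I) (carrier G)"
  by (simp_all add: is_basis_def)

lemma coords_mem:
  assumes "is_basis G q b I" "y \<in> carrier G"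
  shows "coords G q b I y \<in> coeff_vectors q I"
  using inv_into_into[of y "\<lambda>v. lincomb G b v I" "coeff_vectors q I"]
    bij_betw_imp_surj_on[OF basis_bij[OF assms(1)]] assms(2)
  by (simp add: coords_def)

lemma lincomb_coords:
  assumes "is_basis G q b I" "y \<in> carrier G"
  shows "lincomb G b (coords G q b I y) I = y"
  using f_inv_into_f[of y "\<lambda>v. lincomb G b v I" "coeff_vectors q I"]
    bij_betw_imp_surj_on[OF basis_bij[OF assms(1)]] assms(2)
  by (simp add: coords_def)

lemma coords_less:
  assumes "is_basis G q b I" "y \<in> carrier G" "i \<in> I"
  shows "coords G q b I y i < q"
proof -
  have "coords G q b I y \<in> PiE I (\<lambda>_. {..<q})"
    using coords_mem[OF assms(1,2)] by (simp only: coeff_vectors_def)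
  then show ?thesis using PiE_mem[OF _ assms(3)] by blast
qed

lemma coords_lincomb:
  assumes bas: "is_basis G q b I" and q: "0 < q"
  shows "coords G q b I (lincomb G b v I) = (\<lambda>i\<in>I. v i mod q)"
proof -
  have exp: "\<And>i. i \<in> I \<Longrightarrow> b i [^] q = \<one>"
    using basis_exponent[OF bas] basis_closed[OF bas] by auto
  have "lincomb G b v I = lincomb G b (\<lambda>i. v i mod q) I"
    using lincomb_mod[OF exp basis_closed[OF bas]] by simp
  also have "\<dots> = lincomb G b (\<lambda>i\<in>I. v i mod q) I"
    using basis_closed[OF bas] by (intro lincomb_cong) auto
  finally have "lincomb G b v I = lincomb G b (\<lambda>i\<in>I. v i mod q) I" .
  then show ?thesis unfolding coords_def
    using inv_into_f_f[OF bij_betw_imp_inj_on[OF basis_bij[OF bas]] coeff_vectors_mod[OF q]] by simp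
qed

lemma coords_mult:
  assumes "is_basis G q b I" "0 < q" "y \<in> carrier G" "z \<in> carrier G"
  shows "coords G q b I (y \<otimes> z) = (\<lambda>i\<in>I. (coords G q b I y i + coords G q b I z i) mod q)"
  using lincomb_mult[OF basis_closed[OF assms(1)], of "coords G q b I y" "coords G q b I z"]
    coords_lincomb[OF assms(1,2)] lincomb_coords[OF assms(1)] assms(3,4)
  by simp

lemma coords_basis_vector:
  assumes "is_basis G q b I" "1 < q" "j \<in> I"
  shows "coords G q b I (b j) = (\<lambda>i\<in>I. if i = j then 1 else 0)"
proof -
  have "coords G q b I (b j) = (\<lambda>i\<in>I. (if i = j then 1 else 0) mod q)"
    using coords_lincomb[OF assms(1), of "\<lambda>i. if i = j then 1 else 0"] assms(2)
      lincomb_unit_vector[OF basis_finite[OF assms(1)] assms(3) basis_closed[OF assms(1)]]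
    by simp
  also have "\<dots> = (\<lambda>i\<in>I. if i = j then 1 else 0)"
    using assms(2) by (intro restrict_ext) simp
  finally show ?thesis .
qed

lemma basis_vector_ne_one:
  assumes "is_basis G q b I" "1 < q" "j \<in> I"
  shows "b j \<noteq> \<one>"
proof
  assume "b j = \<one>"
  then have "coords G q b I (b j) j = coords G q b I (lincomb G b (\<lambda>i. 0) I) j"
    by (simp add: lincomb_zero)
  then show False
    using coords_basis_vector[OF assms] coords_lincomb[OF assms(1), of "\<lambda>i. 0"] assms(2,3)
    by simp
qed

text \<open>Universal property of a basis: the basis vectors may be sent to arbitrary elements by an
  endomorphism (the group has exponent dividing \<open>q\<close>, so there is no obstruction).\<close>
lemma basis_extend_hom:
  assumes bas: "is_basis G q c I" and q: "1 < q" and g: "g \<in> I \<rightarrow> carrier G"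
  shows "\<exists>h\<in>hom G G. \<forall>i\<in>I. h (c i) = g i"
proof -
  define h where "h y = lincomb G g (coords G q c I y) I" for y
  have g_exp: "\<And>i. i \<in> I \<Longrightarrow> g i [^] q = \<one>" using g basis_exponent[OF bas] by auto
  have "h (y \<otimes> z) = h y \<otimes> h z" if "y \<in> carrier G" "z \<in> carrier G" for y z
  proof -
    have "h (y \<otimes> z) = lincomb G g (\<lambda>i. (coords G q c I y i + coords G q c I z i) mod q) I"
      unfolding h_def using coords_mult[OF bas _ that] q g by (intro lincomb_cong) auto
    also have "\<dots> = lincomb G g (\<lambda>i. coords G q c I y i + coords G q c I z i) I"
      by (rule lincomb_mod[OF g_exp g])
    also have "\<dots> = h y \<otimes> h z"
      unfolding h_def by (rule lincomb_mult[OF g, symmetric])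
    finally show ?thesis .
  qed
  then have "h \<in> hom G G" using g by (auto simp: hom_def h_def)
  moreover have "h (c i) = g i" if i: "i \<in> I" for i
  proof -
    have "h (c i) = lincomb G g (\<lambda>k. if k = i then 1 else 0) I"
      unfolding h_def using coords_basis_vector[OF bas q i] g by (intro lincomb_cong) auto
    then show ?thesis using lincomb_unit_vector[OF basis_finite[OF bas] i g] by simp
  qed
  ultimately show ?thesis by blast
qed

lemma hom_eq_on_basis:
  assumes bas: "is_basis G q c I" and f: "f \<in> hom G G" and g: "g \<in> hom G G"
    and eq: "\<And>i. i \<in> I \<Longrightarrow> f (c i) = g (c i)" and y: "y \<in> carrier G"
  shows "f y = g y"
proof -
  have "f y = f (lincomb G c (coords G q c I y) I)" using lincomb_coords[OF bas y] by simp
  also have "\<dots> = lincomb G (\<lambda>i. f (c i)) (coords G q c I y) I"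
    by (rule lincomb_hom[OF comm_group_axioms f basis_finite[OF bas] basis_closed[OF bas]])
  also have "\<dots> = lincomb G (\<lambda>i. g (c i)) (coords G q c I y) I"
    using eq basis_closed[OF bas] g by (intro lincomb_cong) (auto simp: hom_def)
  also have "\<dots> = g (lincomb G c (coords G q c I y) I)"
    by (rule lincomb_hom[OF comm_group_axioms g basis_finite[OF bas] basis_closed[OF bas], symmetric])
  also have "\<dots> = g y" using lincomb_coords[OF bas y] by simp
  finally show ?thesis .
qed

lemma basis_intro:
  assumes "finite I" "b \<in> I \<rightarrow> carrier G" "\<And>y. y \<in> carrier G \<Longrightarrow> y [^] q = \<one>"
    and "inj_on (\<lambda>v. lincomb G b v I) (coeff_vectors q I)"
    and "\<And>y. y \<in> carrier G \<Longrightarrow> \<exists>v\<in>coeff_vectors q I. lincomb G b v I = y"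
  shows "is_basis G q b I"
proof -
  have "(\<lambda>v. lincomb G b v I) ` coeff_vectors q I = carrier G"
    using assms(2,5) by (auto intro: lincomb_closed)
  then show ?thesis using assms(1-4) by (simp add: is_basis_def bij_betw_def)
qed

lemma nat_pow_subgroup: "y [^]\<^bsub>G\<lparr>carrier := K\<rparr>\<^esub> (n::nat) = y [^] n"
  by (simp add: nat_pow_def)

end

text \<open>A \<^emph>\<open>unit functional\<close> on a group of exponent dividing \<open>q\<close> is an additive map
  \<open>lam\<close> to \<open>\<int>/q\<close> (represented by \<open>{..<q}\<close>) together with an element \<open>x\<close> with \<open>lam x = 1\<close>.
  It splits the group as the internal direct product of the cyclic group generated by \<open>x\<close> and
  the kernel of \<open>lam\<close>; the retraction onto the kernel is \<open>y \<mapsto> y \<otimes> inv (x [^] lam y)\<close>.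
  This splitting drives both the exchange lemma and the diagonalization of idempotents.\<close>
locale unit_functional = comm_group G for G :: "('a, 'b) monoid_scheme" (structure) +
  fixes q :: nat and x :: 'a and lam :: "'a \<Rightarrow> nat"
  assumes q_gt_1: "1 < q"
    and exponent: "\<And>y. y \<in> carrier G \<Longrightarrow> y [^] q = \<one>"
    and x_closed: "x \<in> carrier G"
    and lam_less: "\<And>y. y \<in> carrier G \<Longrightarrow> lam y < q"
    and lam_mult: "\<And>y z. y \<in> carrier G \<Longrightarrow> z \<in> carrier G \<Longrightarrow> lam (y \<otimes> z) = (lam y + lam z) mod q"
    and lam_x: "lam x = 1"
begin

definition lam_kernel :: "'a set" where
  "lam_kernel = {y \<in> carrier G. lam y = 0}"

definition retract :: "'a \<Rightarrow> 'a" where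
  "retract y = y \<otimes> inv (x [^] lam y)"

lemma lam_one: "lam \<one> = 0"
proof -
  have "lam \<one> = (lam \<one> + lam \<one>) mod q" using lam_mult[of \<one> \<one>] by simp
  then show ?thesis using lam_less[OF one_closed] by (simp add: mod_if split: if_split_asm)
qed

lemma lam_pow: "lam (x [^] (m::nat)) = m mod q"
proof (induct m)
  case 0
  then show ?case by (simp add: lam_one)
next
  case (Suc m)
  then show ?case using x_closed by (simp add: lam_mult lam_x mod_Suc_eq)
qed

lemma x_pow_lam_mult:
  assumes "y \<in> carrier G" "z \<in> carrier G"
  shows "x [^] lam (y \<otimes> z) = x [^] lam y \<otimes> x [^] lam z"
proof -
  have "x [^] lam (y \<otimes> z) = x [^] ((lam y + lam z) mod q)" using assms by (simp add: lam_mult)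
  also have "\<dots> = x [^] (lam y + lam z)"
    using pow_mod_exponent[OF x_closed exponent[OF x_closed]] by simp
  finally show ?thesis using x_closed by (simp add: nat_pow_mult)
qed

lemma inv_x_pow: "t \<le> q \<Longrightarrow> inv (x [^] t) = x [^] (q - t)"
  using x_closed exponent[OF x_closed] nat_pow_mult[OF x_closed, of "q - t" t]
  by (intro inv_equality) simp_all

lemma retract_closed: "y \<in> carrier G \<Longrightarrow> retract y \<in> carrier G"
  using x_closed by (simp add: retract_def)

lemma retract_hom: "retract \<in> hom G G"
proof (rule homI)
  fix y z assume "y \<in> carrier G" "z \<in> carrier G"
  then show "retract (y \<otimes> z) = retract y \<otimes> retract z"
    using x_closed by (simp add: retract_def x_pow_lam_mult inv_mult m_ac)
qed (rule retract_closed)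

lemma decompose: "y \<in> carrier G \<Longrightarrow> x [^] lam y \<otimes> retract y = y"
  using x_closed by (simp add: retract_def m_lcomm)

text \<open>The retraction lands in the kernel: \<open>lam y = lam y + lam (retract y)\<close> forces \<open>lam (retract y) = 0\<close>.\<close>
lemma retract_in_kernel:
  assumes y: "y \<in> carrier G"
  shows "retract y \<in> lam_kernel"
proof -
  have "lam y = (lam y mod q + lam (retract y)) mod q"
    using lam_mult[OF nat_pow_closed[OF x_closed] retract_closed[OF y]] decompose[OF y] lam_pow
    by metis
  then have "lam (retract y) = 0"
    using lam_less[OF y] lam_less[OF retract_closed[OF y]] by (simp add: mod_if split: if_split_asm)
  then show ?thesis using retract_closed[OF y] by (simp add: lam_kernel_def)
qed

lemma retract_on_kernel: "y \<in> lam_kernel \<Longrightarrow> retract y = y"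
  by (simp add: lam_kernel_def retract_def)

lemma retract_x: "retract x = \<one>"
  using x_closed by (simp add: retract_def lam_x)

lemma lam_decompose:
  assumes "t < q" "k \<in> lam_kernel"
  shows "lam (x [^] t \<otimes> k) = t"
  using assms x_closed by (simp add: lam_kernel_def lam_mult lam_pow)

lemma kernel_subgroup: "subgroup lam_kernel G"
proof (rule subgroupI)
  show "lam_kernel \<subseteq> carrier G" by (auto simp: lam_kernel_def)
  show "lam_kernel \<noteq> {}" using lam_one by (auto simp: lam_kernel_def)
  fix y z assume y: "y \<in> lam_kernel" and z: "z \<in> lam_kernel"
  then show "y \<otimes> z \<in> lam_kernel" by (simp add: lam_kernel_def lam_mult)
  have yG: "y \<in> carrier G" "lam y = 0" using y by (auto simp: lam_kernel_def)
  have "lam (inv y) = (lam y + lam (inv y)) mod q" using yG lam_less[of "inv y"] by simp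
  also have "\<dots> = lam (y \<otimes> inv y)" using yG by (intro lam_mult[symmetric]) auto
  also have "\<dots> = 0" using yG lam_one by simp
  finally show "inv y \<in> lam_kernel" using yG by (simp add: lam_kernel_def)
qed

lemma kernel_comm_group: "comm_group (G\<lparr>carrier := lam_kernel\<rparr>)"
  by (rule subgroup_comm_group[OF kernel_subgroup])

lemma lincomb_retract:
  assumes "finite J" "b \<in> J \<rightarrow> carrier G"
  shows "lincomb (G\<lparr>carrier := lam_kernel\<rparr>) (\<lambda>i. retract (b i)) v J = retract (lincomb G b v J)"
proof -
  have "(\<lambda>i. retract (b i)) \<in> J \<rightarrow> lam_kernel" using assms(2) retract_in_kernel by auto
  then show ?thesis
    using lincomb_subgroup[OF kernel_subgroup assms(1)] lincomb_hom[OF comm_group_axioms retract_hom assms]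
    by simp
qed

lemma decompose_unique:
  assumes "t < q" "t' < q" "k \<in> lam_kernel" "k' \<in> lam_kernel" "x [^] t \<otimes> k = x [^] t' \<otimes> k'"
  shows "t = t'" and "k = k'"
proof -
  show "t = t'" using lam_decompose[OF assms(1,3)] lam_decompose[OF assms(2,4)] assms(5) by simp
  then show "k = k'"
    using assms(3-5) x_closed l_cancel[of "x [^] t'" k k'] by (auto simp: lam_kernel_def)
qed

lemma lincomb_fixed_vector:
  assumes "finite J" "j \<notin> J" "b \<in> J \<rightarrow> carrier G" "b j = x"
  shows "lincomb G b (v(j := t)) (insert j J) = x [^] t \<otimes> lincomb G b v J"
  using lincomb_insert_upd[OF assms(1-3) x_closed] assms(4) by (metis fun_upd_triv)

lemma kernel_retract_inj:
  assumes bas: "is_basis G q b (insert j J)" and j: "j \<notin> J" and bj: "b j = x"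
  shows "inj_on (\<lambda>v. retract (lincomb G b v J)) (coeff_vectors q J)"
proof (rule inj_onI)
  have finJ: "finite J" using basis_finite[OF bas] by simp
  have bJ: "b \<in> J \<rightarrow> carrier G" using basis_closed[OF bas] by auto
  have retract_form:
    "retract (lincomb G b v J) = lincomb G b (v(j := q - lam (lincomb G b v J))) (insert j J)" for v
    using lam_less[OF lincomb_closed[OF bJ]] x_closed lincomb_closed[OF bJ]
    by (simp add: lincomb_fixed_vector[OF finJ j bJ bj] retract_def inv_x_pow less_imp_le m_comm)
  fix v w assume v: "v \<in> coeff_vectors q J" and w: "w \<in> coeff_vectors q J"
    and "retract (lincomb G b v J) = retract (lincomb G b w J)"
  then have "coords G q b (insert j J) (lincomb G b (v(j := q - lam (lincomb G b v J))) (insert j J))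
      = coords G q b (insert j J) (lincomb G b (w(j := q - lam (lincomb G b w J))) (insert j J))"
    by (simp only: retract_form)
  then have eq: "(\<lambda>i\<in>insert j J. (v(j := q - lam (lincomb G b v J))) i mod q)
      = (\<lambda>i\<in>insert j J. (w(j := q - lam (lincomb G b w J))) i mod q)"
    using q_gt_1 by (simp only: coords_lincomb[OF bas] zero_less_one less_trans)
  show "v = w"
  proof (rule coeff_vectors_eqI[OF v w])
    fix i assume i: "i \<in> J"
    then have "v i mod q = w i mod q" using fun_cong[OF eq, of i] j by (auto split: if_splits)
    then show "v i = w i" using v w i by (simp add: coeff_vectors_def PiE_iff)
  qed
qed

lemma kernel_retract_surj:
  assumes bas: "is_basis G q b (insert j J)" and j: "j \<notin> J" and bj: "b j = x"
    and y: "y \<in> lam_kernel"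
  shows "\<exists>v\<in>coeff_vectors q J. retract (lincomb G b v J) = y"
proof
  have finJ: "finite J" using basis_finite[OF bas] by simp
  have bJ: "b \<in> J \<rightarrow> carrier G" using basis_closed[OF bas] by auto
  have yG: "y \<in> carrier G" using y by (simp add: lam_kernel_def)
  define w where "w = coords G q b (insert j J) y"
  have "y = lincomb G b (w(j := w j)) (insert j J)" using lincomb_coords[OF bas yG] by (simp add: w_def)
  also have "\<dots> = x [^] w j \<otimes> lincomb G b w J" by (rule lincomb_fixed_vector[OF finJ j bJ bj])
  finally have "retract y = retract (x [^] w j) \<otimes> retract (lincomb G b w J)"
    using x_closed lincomb_closed[OF bJ] retract_hom by (simp add: hom_mult)
  also have "retract (x [^] w j) = \<one>"
    using x_closed retract_hom retract_x by (simp add: hom_nat_pow)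
  finally have "y = retract (lincomb G b w J)"
    using retract_on_kernel[OF y] retract_closed lincomb_closed[OF bJ] by simp
  also have "lincomb G b w J = lincomb G b (restrict w J) J" using bJ by (intro lincomb_cong) auto
  finally show "retract (lincomb G b (restrict w J) J) = y" by simp
  show "restrict w J \<in> coeff_vectors q J"
    using coords_mem[OF bas yG] by (auto simp: coeff_vectors_def w_def)
qed

lemma kernel_basis:
  assumes bas: "is_basis G q b (insert j J)" and j: "j \<notin> J" and bj: "b j = x"
  shows "is_basis (G\<lparr>carrier := lam_kernel\<rparr>) q (\<lambda>i. retract (b i)) J"
proof -
  define H where "H = G\<lparr>carrier := lam_kernel\<rparr>"
  interpret H: comm_group H unfolding H_def by (rule kernel_comm_group)
  have finJ: "finite J" using basis_finite[OF bas] by simp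
  have bJ: "b \<in> J \<rightarrow> carrier G" using basis_closed[OF bas] by auto
  have cK: "(\<lambda>i. retract (b i)) \<in> J \<rightarrow> carrier H" using bJ retract_in_kernel by (auto simp: H_def)
  have lincomb_H: "lincomb H (\<lambda>i. retract (b i)) v J = retract (lincomb G b v J)" for v
    unfolding H_def by (rule lincomb_retract[OF finJ bJ])
  have "inj_on (\<lambda>v. lincomb H (\<lambda>i. retract (b i)) v J) (coeff_vectors q J)"
    using kernel_retract_inj[OF bas j bj] by (simp add: lincomb_H)
  moreover have "\<exists>v\<in>coeff_vectors q J. lincomb H (\<lambda>i. retract (b i)) v J = y" if "y \<in> carrier H" for y
  proof -
    have "y \<in> lam_kernel" using that by (simp add: H_def)
    then show ?thesis using kernel_retract_surj[OF bas j bj] by (simp add: lincomb_H)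
  qed
  moreover have "y [^]\<^bsub>H\<^esub> q = \<one>\<^bsub>H\<^esub>" if "y \<in> carrier H" for y
    using exponent that by (auto simp: H_def nat_pow_subgroup lam_kernel_def)
  ultimately show ?thesis using H.basis_intro[OF finJ cK] by (simp add: H_def)
qed

lemma lincomb_adjoin:
  assumes "finite J" "j \<notin> J" "c \<in> J \<rightarrow> lam_kernel"
  shows "lincomb G (c(j := x)) v (insert j J) = x [^] v j \<otimes> lincomb (G\<lparr>carrier := lam_kernel\<rparr>) c v J"
proof -
  have cG: "c \<in> J \<rightarrow> carrier G" using assms(3) by (auto simp: lam_kernel_def)
  show ?thesis
    using lincomb_insert_upd[OF assms(1,2) cG x_closed, of v "v j"]
      lincomb_subgroup[OF kernel_subgroup assms(1,3)] by simp
qed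

text \<open>Conversely, \<open>x\<close> together with a basis of the kernel is a basis of the whole group, because
  every element decomposes uniquely as \<open>x [^] t \<otimes> k\<close>: first injectivity \<dots>\<close>
lemma adjoin_inj:
  assumes basK: "is_basis (G\<lparr>carrier := lam_kernel\<rparr>) q c J" and j: "j \<notin> J"
  shows "inj_on (\<lambda>v. lincomb G (c(j := x)) v (insert j J)) (coeff_vectors q (insert j J))"
proof (rule inj_onI)
  define H where "H = G\<lparr>carrier := lam_kernel\<rparr>"
  interpret H: comm_group H unfolding H_def by (rule kernel_comm_group)
  have basH: "is_basis H q c J" using basK by (simp add: H_def)
  have cK: "c \<in> J \<rightarrow> lam_kernel" using H.basis_closed[OF basH] by (simp add: H_def)
  have lincomb_H: "lincomb H c v J \<in> lam_kernel" for v
    using H.lincomb_closed[of c J v] cK by (simp add: H_def)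
  fix v w assume v: "v \<in> coeff_vectors q (insert j J)" and w: "w \<in> coeff_vectors q (insert j J)"
    and "lincomb G (c(j := x)) v (insert j J) = lincomb G (c(j := x)) w (insert j J)"
  then have "x [^] v j \<otimes> lincomb H c v J = x [^] w j \<otimes> lincomb H c w J"
    using lincomb_adjoin[OF H.basis_finite[OF basH] j cK] by (simp add: H_def)
  moreover have "v j < q" "w j < q" using v w by (auto simp: coeff_vectors_def)
  ultimately have vj: "v j = w j" and "lincomb H c v J = lincomb H c w J"
    using decompose_unique lincomb_H by blast+
  then have "lincomb H c (restrict v J) J = lincomb H c (restrict w J) J"
    using cK H.lincomb_cong[of J "restrict v J" v c c] H.lincomb_cong[of J "restrict w J" w c c]
    by (simp add: H_def)
  moreover have "restrict v J \<in> coeff_vectors q J" "restrict w J \<in> coeff_vectors q J"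
    using v w by (auto simp: coeff_vectors_def)
  ultimately have restr: "restrict v J = restrict w J"
    using inj_onD[OF bij_betw_imp_inj_on[OF H.basis_bij[OF basH]]] by blast
  show "v = w"
  proof (rule coeff_vectors_eqI[OF v w])
    fix i assume "i \<in> insert j J"
    then show "v i = w i" using vj fun_cong[OF restr, of i] by (cases "i = j") auto
  qed
qed

text \<open>\<dots> and then surjectivity, via \<open>y = x [^] lam y \<otimes> retract y\<close>.\<close>
lemma adjoin_basis:
  assumes basK: "is_basis (G\<lparr>carrier := lam_kernel\<rparr>) q c J" and j: "j \<notin> J"
  shows "is_basis G q (c(j := x)) (insert j J)"
proof -
  define H where "H = G\<lparr>carrier := lam_kernel\<rparr>"
  interpret H: comm_group H unfolding H_def by (rule kernel_comm_group)
  have basH: "is_basis H q c J" using basK by (simp add: H_def)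
  have finJ: "finite J" using H.basis_finite[OF basH] .
  have cK: "c \<in> J \<rightarrow> lam_kernel" using H.basis_closed[OF basH] by (simp add: H_def)
  have cxI: "c(j := x) \<in> insert j J \<rightarrow> carrier G" using cK x_closed by (auto simp: lam_kernel_def)
  have surj: "\<exists>v\<in>coeff_vectors q (insert j J). lincomb G (c(j := x)) v (insert j J) = y"
    if y: "y \<in> carrier G" for y
  proof -
    have "retract y \<in> carrier H" using retract_in_kernel[OF y] by (simp add: H_def)
    then obtain w where w: "w \<in> coeff_vectors q J" "lincomb H c w J = retract y"
      using bij_betw_imp_surj_on[OF H.basis_bij[OF basH]] by (metis imageE)
    define v where "v = (\<lambda>i\<in>insert j J. if i = j then lam y else w i)"
    have "lincomb H c v J = lincomb H c w J"
      using cK j by (intro H.lincomb_cong) (auto simp: v_def H_def)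
    then have "lincomb G (c(j := x)) v (insert j J) = y"
      using decompose[OF y] w(2) lincomb_adjoin[OF finJ j cK] by (simp add: v_def H_def)
    moreover have "v \<in> coeff_vectors q (insert j J)"
      using w(1) lam_less[OF y] by (auto simp: v_def coeff_vectors_def)
    ultimately show ?thesis by blast
  qed
  show ?thesis using basis_intro[OF finite.insertI[OF finJ] cxI exponent adjoin_inj[OF basK j] surj] .
qed

end

definition idem_endo :: "('a, 'b) monoid_scheme \<Rightarrow> ('a \<Rightarrow> 'a) \<Rightarrow> bool" where
  "idem_endo G e \<longleftrightarrow> e \<in> hom G G \<and> (\<forall>y\<in>carrier G. e (e y) = e y)"

definition diagonal :: "('a, 'b) monoid_scheme \<Rightarrow> (nat \<Rightarrow> 'a) \<Rightarrow> nat set \<Rightarrow> ('a \<Rightarrow> 'a) \<Rightarrow> bool" where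
  "diagonal G c I e \<longleftrightarrow> (\<forall>i\<in>I. e (c i) = c i \<or> e (c i) = \<one>\<^bsub>G\<^esub>)"

lemma coprime_inverse_mod:
  fixes u q :: nat
  assumes "coprime u q" "1 < q"
  obtains d where "(u * d) mod q = 1"
proof (cases "u = 0")
  case True
  then show ?thesis using assms by simp
next
  case False
  obtain d k where "u * d = q * k + gcd u q" using bezout_nat[OF False] by blast
  then have "(u * d) mod q = (1 + q * k) mod q" using assms(1) by simp
  also have "\<dots> = 1" using assms(2) by (metis mod_mult_self2 mod_less)
  finally show ?thesis by (rule that)
qed

lemma mod_unit_cancel:
  fixes u d c q :: nat
  assumes "(u * d) mod q = 1" "c < q" "(d * c) mod q = 0"
  shows "c = 0"
proof -
  have "c = (c * ((u * d) mod q)) mod q" using assms(1,2) by simp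
  also have "\<dots> = (u * (d * c)) mod q" by (simp add: mod_mult_right_eq ac_simps)
  also have "\<dots> = 0" using assms(3) by (metis mod_mult_right_eq mult_0_right mod_0)
  finally show ?thesis .
qed

lemma prime_power_unit_summand:
  fixes p k s t :: nat
  assumes p: "Factorial_Ring.prime p" and k: "k \<ge> 1" and sum: "(s + t) mod p ^ k = 1"
  shows "coprime s (p ^ k) \<or> coprime t (p ^ k)"
proof (rule ccontr)
  assume "\<not> ?thesis"
  then have "p dvd s" "p dvd t"
    using p by (metis coprime_commute coprime_power_right_iff prime_imp_coprime)+
  moreover have "p dvd p ^ k" using k by (simp add: dvd_power)
  ultimately have "p dvd (s + t) mod p ^ k" by (simp add: dvd_mod)
  then show False using sum p by simp
qed

context comm_group
begin

lemma basis_cong: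
  assumes bas: "is_basis G q b I" and eq: "\<And>i. i \<in> I \<Longrightarrow> b i = b' i"
  shows "is_basis G q b' I"
proof -
  have b': "b' \<in> I \<rightarrow> carrier G"
  proof
    fix i assume "i \<in> I"
    then show "b' i \<in> carrier G" using basis_closed[OF bas] eq[of i] by (metis Pi_mem)
  qed
  have "bij_betw (\<lambda>v. lincomb G b' v I) (coeff_vectors q I) (carrier G)"
    using basis_bij[OF bas]
  proof (rule bij_betw_cong[THEN iffD1, rotated])
    show "lincomb G b v I = lincomb G b' v I" for v using eq b' by (intro lincomb_cong) auto
  qed
  then show ?thesis using bas b' by (simp add: is_basis_def)
qed

lemma exchange:
  assumes bas: "is_basis G q a (insert j J)" and j: "j \<notin> J" and q: "1 < q"
    and x: "x \<in> carrier G" and unit: "coprime (coords G q a (insert j J) x j) q"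
  shows "is_basis G q (a(j := x)) (insert j J)"
proof -
  define c where "c y = coords G q a (insert j J) y j" for y
  have c_less: "\<And>y. y \<in> carrier G \<Longrightarrow> c y < q"
    using coords_less[OF bas] by (simp add: c_def)
  have c_mult: "\<And>y z. y \<in> carrier G \<Longrightarrow> z \<in> carrier G \<Longrightarrow> c (y \<otimes> z) = (c y + c z) mod q"
    using coords_mult[OF bas] q by (simp add: c_def)
  have aj: "a j \<in> carrier G" using basis_closed[OF bas] by auto
  interpret A: unit_functional G q "a j" c
  proof (rule unit_functional.intro[OF comm_group_axioms unit_functional_axioms.intro])
    show "c (a j) = 1" using coords_basis_vector[OF bas q] by (simp add: c_def)
  qed (fact q basis_exponent[OF bas] aj c_less c_mult)+
  obtain d where d: "(c x * d) mod q = 1"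
    using coprime_inverse_mod[OF _ q] unit unfolding c_def by blast
  define lam where "lam y = (d * c y) mod q" for y
  interpret B: unit_functional G q x lam
  proof (rule unit_functional.intro[OF comm_group_axioms unit_functional_axioms.intro])
    show "lam (y \<otimes> z) = (lam y + lam z) mod q" if "y \<in> carrier G" "z \<in> carrier G" for y z
      using c_mult[OF that] by (simp add: lam_def mod_mult_right_eq mod_add_eq distrib_left)
    show "lam x = 1" using d by (simp add: lam_def mult.commute)
    show "lam y < q" for y using q by (simp add: lam_def)
  qed (fact q basis_exponent[OF bas] x)+
  have same_kernel: "B.lam_kernel = A.lam_kernel"
  proof -
    have "lam y = 0 \<longleftrightarrow> c y = 0" if "y \<in> carrier G" for y
      using mod_unit_cancel[OF d c_less[OF that]] by (auto simp: lam_def)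
    then show ?thesis by (auto simp: A.lam_kernel_def B.lam_kernel_def)
  qed
  have "is_basis (G\<lparr>carrier := A.lam_kernel\<rparr>) q (\<lambda>i. A.retract (a i)) J"
    by (rule A.kernel_basis[OF bas j refl])
  then have "is_basis G q ((\<lambda>i. A.retract (a i))(j := x)) (insert j J)"
    using B.adjoin_basis[OF _ j] by (simp add: same_kernel)
  moreover have "((\<lambda>i. A.retract (a i))(j := x)) i = (a(j := x)) i" if "i \<in> insert j J" for i
  proof (cases "i = j")
    case False
    then have "i \<in> J" using that by simp
    then have "c (a i) = 0" using coords_basis_vector[OF bas q] j by (auto simp: c_def)
    then have "a i \<in> A.lam_kernel" using basis_closed[OF bas] \<open>i \<in> J\<close> by (auto simp: A.lam_kernel_def)
    then show ?thesis using False A.retract_on_kernel by simp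
  qed simp
  ultimately show ?thesis by (rule basis_cong)
qed

text \<open>Induction step of the diagonalization when the new basis vector is fixed by \<open>e\<close>: the
  \<open>j\<close>-th coordinate of \<open>e\<close> is a unit functional whose kernel is \<open>e\<close>-invariant and has a basis
  indexed by \<open>J\<close>.\<close>
lemma diagonalize_fixed_vector:
  assumes bas: "is_basis G q b (insert j J)" and j: "j \<notin> J" and q: "1 < q"
    and e: "idem_endo G e" and fixed: "e (b j) = b j"
    and IH: "\<And>(H :: ('a, 'b) monoid_scheme) c f. comm_group H \<Longrightarrow> is_basis H q c J
               \<Longrightarrow> idem_endo H f \<Longrightarrow> \<exists>c'. is_basis H q c' J \<and> diagonal H c' J f"
  shows "\<exists>c. is_basis G q c (insert j J) \<and> diagonal G c (insert j J) e"
proof -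
  define lam where "lam y = coords G q b (insert j J) (e y) j" for y
  have e_hom: "e \<in> hom G G" and e_idem: "\<And>y. y \<in> carrier G \<Longrightarrow> e (e y) = e y"
    using e by (auto simp: idem_endo_def)
  have e_closed: "\<And>y. y \<in> carrier G \<Longrightarrow> e y \<in> carrier G" using e_hom by (auto simp: hom_def)
  have bj: "b j \<in> carrier G" using basis_closed[OF bas] by auto
  interpret F: unit_functional G q "b j" lam
  proof (rule unit_functional.intro[OF comm_group_axioms unit_functional_axioms.intro])
    show "\<And>y. y \<in> carrier G \<Longrightarrow> lam y < q"
      using coords_less[OF bas] e_closed by (simp add: lam_def)
    show "lam (y \<otimes> z) = (lam y + lam z) mod q" if "y \<in> carrier G" "z \<in> carrier G" for y z
      using coords_mult[OF bas _ e_closed[OF that(1)] e_closed[OF that(2)]] q that e_hom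
      by (simp add: lam_def hom_mult)
    show "lam (b j) = 1" using coords_basis_vector[OF bas q] fixed by (simp add: lam_def)
  qed (use q basis_exponent[OF bas] bj in blast)+
  define H where "H = G\<lparr>carrier := F.lam_kernel\<rparr>"
  have H: "comm_group H" unfolding H_def by (rule F.kernel_comm_group)
  have basH: "is_basis H q (\<lambda>i. F.retract (b i)) J"
    unfolding H_def by (rule F.kernel_basis[OF bas j refl])
  have invariant: "e y \<in> F.lam_kernel" if "y \<in> F.lam_kernel" for y
    using that e_idem e_closed by (auto simp: F.lam_kernel_def lam_def)
  have "idem_endo H e"
    using invariant e_idem e_hom by (auto simp: idem_endo_def hom_def H_def F.lam_kernel_def)
  then obtain c where c: "is_basis H q c J" "diagonal H c J e" using IH[OF H basH] by blast
  have "is_basis G q (c(j := b j)) (insert j J)"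
    using F.adjoin_basis[OF _ j] c(1) by (simp add: H_def)
  moreover have "diagonal G (c(j := b j)) (insert j J) e"
    using c(2) fixed j by (auto simp: diagonal_def H_def)
  ultimately show ?thesis by blast
qed

text \<open>The complementary idempotent \<open>y \<mapsto> y \<cdot> e(y)\<^sup>-\<^sup>1\<close> is diagonal in the same bases as \<open>e\<close>.\<close>
lemma idem_endo_complement:
  assumes "idem_endo G e"
  shows "idem_endo G (\<lambda>y. y \<otimes> inv (e y))"
proof -
  have e_hom: "e \<in> hom G G" and e_idem: "\<And>y. y \<in> carrier G \<Longrightarrow> e (e y) = e y"
    using assms by (auto simp: idem_endo_def)
  have e_closed: "\<And>y. y \<in> carrier G \<Longrightarrow> e y \<in> carrier G" using e_hom by (auto simp: hom_def)
  interpret eh: group_hom G G e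
    using e_hom by (simp add: group_hom_def group_hom_axioms_def is_group)
  have "(\<lambda>y. y \<otimes> inv (e y)) \<in> hom G G"
  proof (rule homI)
    fix y z assume y: "y \<in> carrier G" and z: "z \<in> carrier G"
    then show "y \<otimes> z \<otimes> inv (e (y \<otimes> z)) = y \<otimes> inv (e y) \<otimes> (z \<otimes> inv (e z))"
      using e_closed by (simp add: inv_mult m_ac)
  qed (use e_closed in simp)
  moreover have "e (y \<otimes> inv (e y)) = \<one>" if y: "y \<in> carrier G" for y
    using y e_closed[OF y] e_idem[OF y] by simp
  ultimately show ?thesis using e_closed by (simp add: idem_endo_def)
qed

text \<open>If the complementary idempotent is diagonal in a basis, so is \<open>e\<close> (fixed and killed vectors swap roles).\<close>
lemma diagonal_complement:
  assumes e: "idem_endo G e" and c: "c \<in> I \<rightarrow> carrier G"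
    and diag: "diagonal G c I (\<lambda>y. y \<otimes> inv (e y))"
  shows "diagonal G c I e"
  unfolding diagonal_def
proof
  fix i assume i: "i \<in> I"
  have ci: "c i \<in> carrier G" and eci: "e (c i) \<in> carrier G"
    using c i e by (auto simp: idem_endo_def hom_def)
  have "c i \<otimes> inv (e (c i)) = c i \<or> c i \<otimes> inv (e (c i)) = \<one>"
    using diag i by (auto simp: diagonal_def)
  then show "e (c i) = c i \<or> e (c i) = \<one>"
  proof
    assume "c i \<otimes> inv (e (c i)) = c i"
    then show ?thesis using ci eci by simp
  next
    assume "c i \<otimes> inv (e (c i)) = \<one>"
    then have "inv (inv (e (c i))) = c i" using inv_equality ci eci by blast
    then show ?thesis using eci by simp
  qed
qed

text \<open>Induction step of the diagonalization: one of \<open>e(a\<^sub>j)\<close> and \<open>a\<^sub>j \<cdot> e(a\<^sub>j)\<^sup>-\<^sup>1\<close> has a unit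
  \<open>j\<close>-th coordinate and can replace \<open>a\<^sub>j\<close>; it is fixed by \<open>e\<close> or by the complementary idempotent.\<close>
lemma diagonalize_insert:
  assumes p: "Factorial_Ring.prime p" and qk: "q = p ^ k" and k: "k \<ge> 1"
    and bas: "is_basis G q a (insert j J)" and j: "j \<notin> J" and e: "idem_endo G e"
    and IH: "\<And>(H :: ('a, 'b) monoid_scheme) c f. comm_group H \<Longrightarrow> is_basis H q c J
               \<Longrightarrow> idem_endo H f \<Longrightarrow> \<exists>c'. is_basis H q c' J \<and> diagonal H c' J f"
  shows "\<exists>c. is_basis G q c (insert j J) \<and> diagonal G c (insert j J) e"
proof -
  have q: "1 < q" using one_less_power[OF prime_gt_1_nat[OF p], of k] k qk by simp
  define e' where "e' y = y \<otimes> inv (e y)" for y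
  have e': "idem_endo G e'" unfolding e'_def by (rule idem_endo_complement[OF e])
  have aj: "a j \<in> carrier G" using basis_closed[OF bas] by auto
  have e_aj: "e (a j) \<in> carrier G" and e'_aj: "e' (a j) \<in> carrier G"
    using aj e e' by (auto simp: idem_endo_def hom_def)
  define co where "co y = coords G q a (insert j J) y j" for y
  have "e' (a j) \<otimes> e (a j) = a j" using aj e_aj by (simp add: e'_def m_assoc)
  moreover have "co (e' (a j) \<otimes> e (a j)) = (co (e' (a j)) + co (e (a j))) mod q"
    using coords_mult[OF bas _ e'_aj e_aj] q by (simp add: co_def)
  moreover have "co (a j) = 1" using coords_basis_vector[OF bas q] by (simp add: co_def)
  ultimately have "(co (e' (a j)) + co (e (a j))) mod q = 1" by simp
  then consider "coprime (co (e (a j))) q" | "coprime (co (e' (a j))) q"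
    using prime_power_unit_summand[OF p k] qk by (metis add.commute)
  then show ?thesis
  proof cases
    case 1
    have "is_basis G q (a(j := e (a j))) (insert j J)"
      using exchange[OF bas j q e_aj] 1 by (simp add: co_def)
    moreover have "e ((a(j := e (a j))) j) = (a(j := e (a j))) j" using e aj by (simp add: idem_endo_def)
    ultimately show ?thesis by (rule diagonalize_fixed_vector[OF _ j q e _ IH])
  next
    case 2
    have "is_basis G q (a(j := e' (a j))) (insert j J)"
      using exchange[OF bas j q e'_aj] 2 by (simp add: co_def)
    moreover have "e' ((a(j := e' (a j))) j) = (a(j := e' (a j))) j" using e' aj by (simp add: idem_endo_def)
    ultimately have "\<exists>c. is_basis G q c (insert j J) \<and> diagonal G c (insert j J) e'"
      by (rule diagonalize_fixed_vector[OF _ j q e' _ IH])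
    then obtain c where c: "is_basis G q c (insert j J)" "diagonal G c (insert j J) e'" by blast
    then show ?thesis
      using diagonal_complement[OF e basis_closed[OF c(1)] c(2)[unfolded e'_def[abs_def]]] by blast
  qed
qed

end

lemma idem_endo_diagonalizable:
  fixes G :: "('a, 'b) monoid_scheme"
  assumes "finite J" "Factorial_Ring.prime p" "q = p ^ k" "k \<ge> 1"
    and "comm_group G" "is_basis G q a J" "idem_endo G e"
  shows "\<exists>c. is_basis G q c J \<and> diagonal G c J e"
  using assms(1,5-7)
proof (induct J arbitrary: G a e rule: finite_induct)
  case empty
  then show ?case by (auto simp: diagonal_def)
next
  case (insert j J)
  show ?case
    by (rule comm_group.diagonalize_insert[OF insert(4) assms(2-4) insert(5) insert(2) insert(6)])
      (rule insert(3))
qed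

definition conjugate :: "('a, 'b) monoid_scheme \<Rightarrow> ('a \<Rightarrow> 'a) \<Rightarrow> ('a \<Rightarrow> 'a) \<Rightarrow> bool" where
  "conjugate G e e' \<longleftrightarrow> (\<exists>\<phi>\<in>iso G G. \<forall>y\<in>carrier G. \<phi> (e y) = e' (\<phi> y))"

lemma permutation_matching_subsets:
  assumes "finite I" "S \<subseteq> I" "S' \<subseteq> I" "card S = card S'"
  shows "\<exists>\<sigma>. bij_betw \<sigma> I I \<and> (\<forall>i\<in>I. \<sigma> i \<in> S' \<longleftrightarrow> i \<in> S)"
proof -
  have fin: "finite S" "finite S'" using assms finite_subset by auto
  obtain g where g: "bij_betw g S S'" using finite_same_card_bij[OF fin] assms(4) by blast
  have "card (I - S) = card (I - S')" using assms fin by (simp add: card_Diff_subset)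
  then obtain h where h: "bij_betw h (I - S) (I - S')"
    using finite_same_card_bij[of "I - S" "I - S'"] assms(1) by blast
  define \<sigma> where "\<sigma> i = (if i \<in> S then g i else h i)" for i
  have "bij_betw \<sigma> S S'" using g by (rule bij_betw_cong[THEN iffD1, rotated]) (simp add: \<sigma>_def)
  moreover have "bij_betw \<sigma> (I - S) (I - S')"
    using h by (rule bij_betw_cong[THEN iffD1, rotated]) (simp add: \<sigma>_def)
  ultimately have "bij_betw \<sigma> (S \<union> (I - S)) (S' \<union> (I - S'))"
    by (intro bij_betw_combine) auto
  moreover have "S \<union> (I - S) = I" "S' \<union> (I - S') = I" using assms by auto
  ultimately have bij: "bij_betw \<sigma> I I" by simp
  have "\<sigma> i \<in> S' \<longleftrightarrow> i \<in> S" if "i \<in> I" for i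
    using that g h by (cases "i \<in> S") (auto simp: \<sigma>_def bij_betw_def)
  then show ?thesis using bij by blast
qed

lemma card_quotient_invariant:
  assumes R: "R = {(x, y). x \<in> A \<and> y \<in> A \<and> g x = g y}"
  shows "card (A // R) = card (g ` A)"
proof -
  have "R `` {x} = {y \<in> A. g y = g x}" if "x \<in> A" for x using that R by auto
  then have "A // R = (\<lambda>x. {y \<in> A. g y = g x}) ` A" by (auto simp: quotient_def)
  also have "\<dots> = (\<lambda>c. {y \<in> A. g y = c}) ` (g ` A)" by (simp add: image_image)
  finally have "A // R = (\<lambda>c. {y \<in> A. g y = c}) ` (g ` A)" .
  moreover have "inj_on (\<lambda>c. {y \<in> A. g y = c}) (g ` A)"
    by (rule inj_onI) blast
  ultimately show ?thesis by (simp add: card_image)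
qed

context comm_group
begin

lemma hom_comp:
  assumes "f \<in> hom G G" "g \<in> hom G G"
  shows "(\<lambda>y. g (f y)) \<in> hom G G"
proof (rule homI)
  fix x y assume "x \<in> carrier G" "y \<in> carrier G"
  then show "g (f (x \<otimes> y)) = g (f x) \<otimes> g (f y)" using assms by (simp add: hom_mult hom_in_carrier)
qed (use assms in \<open>simp add: hom_in_carrier\<close>)

lemma basis_automorphism:
  assumes c: "is_basis G q c I" and c': "is_basis G q c' I" and q: "1 < q" and \<sigma>: "bij_betw \<sigma> I I"
  shows "\<exists>\<phi>\<in>iso G G. \<forall>i\<in>I. \<phi> (c i) = c' (\<sigma> i)"
proof -
  define \<tau> where "\<tau> = inv_into I \<sigma>"
  have \<sigma>I: "\<And>i. i \<in> I \<Longrightarrow> \<sigma> i \<in> I" and \<tau>I: "\<And>i. i \<in> I \<Longrightarrow> \<tau> i \<in> I"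
    using \<sigma> by (auto simp: \<tau>_def bij_betw_def inv_into_into)
  have \<sigma>\<tau>: "\<And>i. i \<in> I \<Longrightarrow> \<sigma> (\<tau> i) = i" and \<tau>\<sigma>: "\<And>i. i \<in> I \<Longrightarrow> \<tau> (\<sigma> i) = i"
    using \<sigma> by (auto simp: \<tau>_def bij_betw_def f_inv_into_f inv_into_f_f)
  have "(\<lambda>i. c' (\<sigma> i)) \<in> I \<rightarrow> carrier G" using basis_closed[OF c'] \<sigma>I by auto
  then obtain \<phi> where \<phi>: "\<phi> \<in> hom G G" "\<And>i. i \<in> I \<Longrightarrow> \<phi> (c i) = c' (\<sigma> i)"
    using basis_extend_hom[OF c q] by blast
  have "(\<lambda>i. c (\<tau> i)) \<in> I \<rightarrow> carrier G" using basis_closed[OF c] \<tau>I by auto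
  then obtain \<psi> where \<psi>: "\<psi> \<in> hom G G" "\<And>i. i \<in> I \<Longrightarrow> \<psi> (c' i) = c (\<tau> i)"
    using basis_extend_hom[OF c' q] by blast
  have id_hom: "(\<lambda>y. y) \<in> hom G G" by (auto simp: hom_def)
  have "\<psi> (\<phi> (c i)) = c i" if "i \<in> I" for i
    using \<phi>(2)[OF that] \<psi>(2)[OF \<sigma>I[OF that]] \<tau>\<sigma>[OF that] by simp
  then have \<psi>\<phi>: "\<psi> (\<phi> y) = y" if "y \<in> carrier G" for y
    using hom_eq_on_basis[OF c hom_comp[OF \<phi>(1) \<psi>(1)] id_hom _ that] by blast
  have "\<phi> (\<psi> (c' i)) = c' i" if "i \<in> I" for i
    using \<psi>(2)[OF that] \<phi>(2)[OF \<tau>I[OF that]] \<sigma>\<tau>[OF that] by simp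
  then have \<phi>\<psi>: "\<phi> (\<psi> y) = y" if "y \<in> carrier G" for y
    using hom_eq_on_basis[OF c' hom_comp[OF \<psi>(1) \<phi>(1)] id_hom _ that] by blast
  have "bij_betw \<phi> (carrier G) (carrier G)"
    using \<phi>(1) \<psi>(1) \<psi>\<phi> \<phi>\<psi> by (intro bij_betw_byWitness[where f' = \<psi>]) (auto simp: hom_def)
  then show ?thesis using \<phi> by (auto simp: iso_def)
qed

lemma lincomb_diagonal:
  assumes bas: "is_basis G q c I" and e: "e \<in> hom G G" and diag: "diagonal G c I e"
  shows "e (lincomb G c v I) = lincomb G c (\<lambda>i. if e (c i) = c i then v i else 0) I"
proof -
  have "e (lincomb G c v I) = lincomb G (\<lambda>i. e (c i)) v I"
    using lincomb_hom[OF comm_group_axioms e basis_finite[OF bas] basis_closed[OF bas]] .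
  also have "\<dots> = lincomb G c (\<lambda>i. if e (c i) = c i then v i else 0) I"
    unfolding lincomb_def using diag basis_closed[OF bas]
    by (intro finprod_cong') (auto simp: diagonal_def Pi_iff)
  finally show ?thesis .
qed

lemma lincomb_zero_extend:
  assumes "finite I" "S \<subseteq> I" "c \<in> I \<rightarrow> carrier G"
  shows "lincomb G c (\<lambda>i\<in>I. if i \<in> S then v i else 0) I = lincomb G c v S"
proof -
  have "lincomb G c (\<lambda>i\<in>I. if i \<in> S then v i else 0) I = lincomb G c (\<lambda>i\<in>I. if i \<in> S then v i else 0) S"
    using assms by (intro lincomb_zero_out) auto
  also have "\<dots> = lincomb G c v S" using assms(2,3) by (intro lincomb_cong) auto
  finally show ?thesis .
qed

lemma basis_subset_inj:
  assumes bas: "is_basis G q c I" and q: "0 < q" and SI: "S \<subseteq> I"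
  shows "inj_on (\<lambda>v. lincomb G c v S) (coeff_vectors q S)"
proof (rule inj_onI)
  define ext where "ext v = (\<lambda>i\<in>I. if i \<in> S then v i else 0)" for v :: "nat \<Rightarrow> nat"
  fix v w assume v: "v \<in> coeff_vectors q S" and w: "w \<in> coeff_vectors q S"
    and "lincomb G c v S = lincomb G c w S"
  then have "lincomb G c (ext v) I = lincomb G c (ext w) I"
    using lincomb_zero_extend[OF basis_finite[OF bas] SI basis_closed[OF bas]] by (simp add: ext_def)
  moreover have "ext u \<in> coeff_vectors q I" if "u \<in> coeff_vectors q S" for u
    using that q by (auto simp: ext_def coeff_vectors_def)
  ultimately have ext_eq: "ext v = ext w"
    using inj_onD[OF bij_betw_imp_inj_on[OF basis_bij[OF bas]]] v w by blast
  show "v = w"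
  proof (rule coeff_vectors_eqI[OF v w])
    fix i assume "i \<in> S"
    then show "v i = w i" using fun_cong[OF ext_eq, of i] SI by (auto simp: ext_def)
  qed
qed

lemma diagonal_image:
  assumes bas: "is_basis G q c I" and e: "e \<in> hom G G" and diag: "diagonal G c I e"
  shows "e ` carrier G = (\<lambda>v. lincomb G c v {i\<in>I. e (c i) = c i}) ` coeff_vectors q {i\<in>I. e (c i) = c i}"
    (is "_ = (\<lambda>v. lincomb G c v ?S) ` _")
proof -
  have finI: "finite I" and SI: "?S \<subseteq> I" and cI: "c \<in> I \<rightarrow> carrier G"
    using basis_finite[OF bas] basis_closed[OF bas] by auto
  have e_lincomb: "e (lincomb G c v I) = lincomb G c v ?S" for v
  proof -
    have "e (lincomb G c v I) = lincomb G c (\<lambda>i\<in>I. if i \<in> ?S then v i else 0) I"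
      unfolding lincomb_diagonal[OF bas e diag] using cI by (intro lincomb_cong) auto
    then show ?thesis using lincomb_zero_extend[OF finI SI cI] by simp
  qed
  show ?thesis
  proof
    show "e ` carrier G \<subseteq> (\<lambda>v. lincomb G c v ?S) ` coeff_vectors q ?S"
    proof
      fix z assume "z \<in> e ` carrier G"
      then obtain y where y: "y \<in> carrier G" "z = e y" by blast
      have "z = lincomb G c (coords G q c I y) ?S" using y lincomb_coords[OF bas y(1)] e_lincomb by metis
      also have "\<dots> = lincomb G c (restrict (coords G q c I y) ?S) ?S"
        using SI cI by (intro lincomb_cong) auto
      moreover have "restrict (coords G q c I y) ?S \<in> coeff_vectors q ?S"
        using coords_mem[OF bas y(1)] SI by (auto simp: coeff_vectors_def)
      ultimately show "z \<in> (\<lambda>v. lincomb G c v ?S) ` coeff_vectors q ?S" by blast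
    qed
  next
    show "(\<lambda>v. lincomb G c v ?S) ` coeff_vectors q ?S \<subseteq> e ` carrier G"
    proof
      fix z assume "z \<in> (\<lambda>v. lincomb G c v ?S) ` coeff_vectors q ?S"
      then obtain v where z: "z = lincomb G c v ?S" by blast
      define u where "u = (\<lambda>i\<in>I. if i \<in> ?S then v i else 0)"
      have "e (lincomb G c u I) = lincomb G c u ?S" by (rule e_lincomb)
      also have "\<dots> = z" unfolding z using SI cI by (intro lincomb_cong) (auto simp: u_def)
      finally show "z \<in> e ` carrier G" using lincomb_closed[OF cI] by blast
    qed
  qed
qed

lemma diagonal_image_card:
  assumes bas: "is_basis G q c I" and q: "1 < q" and e: "e \<in> hom G G" and diag: "diagonal G c I e"
  shows "card (e ` carrier G) = q ^ card {i\<in>I. e (c i) = c i}"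
proof -
  have "finite {i\<in>I. e (c i) = c i}" using basis_finite[OF bas] by simp
  then show ?thesis
    using diagonal_image[OF bas e diag] basis_subset_inj[OF bas _, of "{i\<in>I. e (c i) = c i}"] q
    by (simp add: card_image card_coeff_vectors)
qed

lemma diagonal_conjugate:
  assumes c: "is_basis G q c I" and c': "is_basis G q c' I" and q: "1 < q"
    and e: "e \<in> hom G G" and diag: "diagonal G c I e"
    and e': "e' \<in> hom G G" and diag': "diagonal G c' I e'"
    and same: "card {i\<in>I. e (c i) = c i} = card {i\<in>I. e' (c' i) = c' i}"
  shows "conjugate G e e'"
proof -
  obtain \<sigma> where \<sigma>: "bij_betw \<sigma> I I"
    and match: "\<forall>i\<in>I. \<sigma> i \<in> {i\<in>I. e' (c' i) = c' i} \<longleftrightarrow> i \<in> {i\<in>I. e (c i) = c i}"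
    using permutation_matching_subsets[OF basis_finite[OF c] _ _ same] by blast
  have \<sigma>I: "\<And>i. i \<in> I \<Longrightarrow> \<sigma> i \<in> I" using \<sigma> by (auto simp: bij_betw_def)
  have fixed_iff: "e' (c' (\<sigma> i)) = c' (\<sigma> i) \<longleftrightarrow> e (c i) = c i" if "i \<in> I" for i
    using match that \<sigma>I[OF that] by auto
  obtain \<phi> where \<phi>: "\<phi> \<in> iso G G" "\<And>i. i \<in> I \<Longrightarrow> \<phi> (c i) = c' (\<sigma> i)"
    using basis_automorphism[OF c c' q \<sigma>(1)] by blast
  have \<phi>_hom: "\<phi> \<in> hom G G" using \<phi>(1) by (simp add: iso_def)
  have "\<phi> (e (c i)) = e' (\<phi> (c i))" if i: "i \<in> I" for i
  proof (cases "e (c i) = c i")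
    case True
    then show ?thesis using fixed_iff[OF i] \<phi>(2)[OF i] by simp
  next
    case False
    then have "e (c i) = \<one>" "e' (c' (\<sigma> i)) = \<one>"
      using diag diag' i \<sigma>I[OF i] fixed_iff[OF i] by (auto simp: diagonal_def)
    then show ?thesis using \<phi>(2)[OF i] \<phi>_hom by (simp add: hom_one)
  qed
  then have "\<phi> (e y) = e' (\<phi> y)" if "y \<in> carrier G" for y
    using hom_eq_on_basis[OF c hom_comp[OF e \<phi>_hom] hom_comp[OF \<phi>_hom e'] _ that] by blast
  then show ?thesis using \<phi>(1) by (auto simp: conjugate_def)
qed

lemma conjugate_image_card:
  assumes "conjugate G e e'" and e: "e \<in> carrier G \<rightarrow> carrier G"
  shows "card (e' ` carrier G) = card (e ` carrier G)"
proof -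
  obtain \<phi> where \<phi>: "\<phi> \<in> iso G G" "\<And>y. y \<in> carrier G \<Longrightarrow> \<phi> (e y) = e' (\<phi> y)"
    using assms(1) by (auto simp: conjugate_def)
  have "e' ` carrier G = e' ` \<phi> ` carrier G" using \<phi>(1) by (simp add: iso_iff)
  also have "\<dots> = \<phi> ` e ` carrier G"
    unfolding image_image using \<phi>(2) by (intro image_cong) auto
  finally have img: "e' ` carrier G = \<phi> ` e ` carrier G" .
  have "inj_on \<phi> (e ` carrier G)"
    using inj_on_subset[of \<phi> "carrier G" "e ` carrier G"] \<phi>(1) e by (auto simp: iso_iff)
  then show ?thesis by (simp add: img card_image)
qed

lemma idem_endo_with_support:
  assumes bas: "is_basis G q a I" and q: "1 < q" and T: "T \<subseteq> I"
  shows "\<exists>e. idem_endo G e \<and> diagonal G a I e \<and> {i\<in>I. e (a i) = a i} = T"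
proof -
  obtain e where e: "e \<in> hom G G" "\<And>i. i \<in> I \<Longrightarrow> e (a i) = (if i \<in> T then a i else \<one>)"
    using basis_extend_hom[OF bas q, of "\<lambda>i. if i \<in> T then a i else \<one>"] basis_closed[OF bas]
    by fastforce
  have "e (e (a i)) = e (a i)" if "i \<in> I" for i
    using e(2)[OF that] e(1) by (simp add: hom_one)
  then have "e (e y) = e y" if "y \<in> carrier G" for y
    using hom_eq_on_basis[OF bas hom_comp[OF e(1) e(1)] e(1) _ that] by blast
  then have "idem_endo G e" using e(1) by (simp add: idem_endo_def)
  moreover have "diagonal G a I e" using e(2) by (simp add: diagonal_def)
  moreover have "e (a i) = a i \<longleftrightarrow> i \<in> T" if i: "i \<in> I" for i
  proof (cases "i \<in> T")
    case False
    have "\<one> \<noteq> a i" using basis_vector_ne_one[OF bas q i] by (rule not_sym)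
    then show ?thesis using e(2)[OF i] False by simp
  qed (use e(2)[OF i] in simp)
  then have "{i\<in>I. e (a i) = a i} = T" using T by auto
  ultimately show ?thesis by blast
qed

end

context comm_group
begin

lemma interchange_op_decompose:
  assumes "m \<in> comm_assoc_interchange_ops G"
  shows "idem_endo G (\<lambda>x. m x \<one>)"
    and "\<And>x y. x \<in> carrier G \<Longrightarrow> y \<in> carrier G \<Longrightarrow> m x y = m x \<one> \<otimes> m y \<one>"
proof -
  have closed: "\<And>x y. x \<in> carrier G \<Longrightarrow> y \<in> carrier G \<Longrightarrow> m x y \<in> carrier G"
    and law: "\<And>w x y z. w \<in> carrier G \<Longrightarrow> x \<in> carrier G \<Longrightarrow> y \<in> carrier G \<Longrightarrow> z \<in> carrier G \<Longrightarrow>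
        m (w \<otimes> x) (y \<otimes> z) = m w y \<otimes> m x z"
    and comm: "\<And>x y. x \<in> carrier G \<Longrightarrow> y \<in> carrier G \<Longrightarrow> m x y = m y x"
    and assoc: "\<And>x y z. x \<in> carrier G \<Longrightarrow> y \<in> carrier G \<Longrightarrow> z \<in> carrier G \<Longrightarrow>
        m (m x y) z = m x (m y z)"
    using assms by (auto simp: comm_assoc_interchange_ops_def interchange_op_def
        op_commutative_def op_associative_def)
  have m_one: "m \<one> \<one> = \<one>"
  proof -
    have c: "m \<one> \<one> \<in> carrier G" using closed by simp
    have "m \<one> \<one> \<otimes> \<one> = m (\<one> \<otimes> \<one>) (\<one> \<otimes> \<one>)" using c by simp
    also have "\<dots> = m \<one> \<one> \<otimes> m \<one> \<one>" by (rule law) simp_all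
    finally have "\<one> = m \<one> \<one>" by (rule l_cancel[OF _ one_closed c c])
    then show ?thesis by (rule sym)
  qed
  show "m x y = m x \<one> \<otimes> m y \<one>" if "x \<in> carrier G" "y \<in> carrier G" for x y
  proof -
    have "m x y = m (x \<otimes> \<one>) (\<one> \<otimes> y)" using that by simp
    also have "\<dots> = m x \<one> \<otimes> m \<one> y" using that by (intro law) simp_all
    finally show ?thesis using comm[OF one_closed that(2)] by simp
  qed
  have "(\<lambda>x. m x \<one>) \<in> hom G G"
  proof (rule homI)
    fix x y assume "x \<in> carrier G" "y \<in> carrier G"
    then show "m (x \<otimes> y) \<one> = m x \<one> \<otimes> m y \<one>"
      using law[of x y \<one> \<one>] by simp
  qed (simp add: closed)
  moreover have "m (m x \<one>) \<one> = m x \<one>" if "x \<in> carrier G" for x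
    using assoc[OF that one_closed one_closed] m_one by simp
  ultimately show "idem_endo G (\<lambda>x. m x \<one>)" by (simp add: idem_endo_def)
qed

lemma interchange_op_of_idem_endo:
  assumes "idem_endo G e"
  shows "(\<lambda>x y. e x \<otimes> e y) \<in> comm_assoc_interchange_ops G"
proof -
  have e_closed: "\<And>x. x \<in> carrier G \<Longrightarrow> e x \<in> carrier G"
    and e_mult: "\<And>x y. x \<in> carrier G \<Longrightarrow> y \<in> carrier G \<Longrightarrow> e (x \<otimes> y) = e x \<otimes> e y"
    and e_idem: "\<And>x. x \<in> carrier G \<Longrightarrow> e (e x) = e x"
    using assms by (auto simp: idem_endo_def hom_def)
  show ?thesis
    unfolding comm_assoc_interchange_ops_def interchange_op_def op_commutative_def op_associative_def
    using e_closed e_mult e_idem by (auto simp: m_ac)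
qed

lemma interchange_iso_iff_conjugate:
  assumes m: "m \<in> comm_assoc_interchange_ops G" and m': "m' \<in> comm_assoc_interchange_ops G"
  shows "interchange_iso G m m' \<longleftrightarrow> conjugate G (\<lambda>x. m x \<one>) (\<lambda>x. m' x \<one>)"
proof
  assume "interchange_iso G m m'"
  then obtain \<phi> where \<phi>: "\<phi> \<in> iso G G" "\<forall>x\<in>carrier G. \<forall>y\<in>carrier G. \<phi> (m x y) = m' (\<phi> x) (\<phi> y)"
    by (auto simp: interchange_iso_def)
  have "\<phi> \<one> = \<one>" using \<phi>(1) hom_one[of \<phi> G G] is_group by (simp add: iso_def)
  then have "\<forall>y\<in>carrier G. \<phi> (m y \<one>) = m' (\<phi> y) \<one>" using \<phi>(2) one_closed by simp
  then show "conjugate G (\<lambda>x. m x \<one>) (\<lambda>x. m' x \<one>)"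
    using \<phi>(1) by (auto simp: conjugate_def)
next
  assume "conjugate G (\<lambda>x. m x \<one>) (\<lambda>x. m' x \<one>)"
  then obtain \<phi> where \<phi>: "\<phi> \<in> iso G G" "\<And>y. y \<in> carrier G \<Longrightarrow> \<phi> (m y \<one>) = m' (\<phi> y) \<one>"
    by (auto simp: conjugate_def)
  have \<phi>_hom: "\<phi> \<in> hom G G" using \<phi>(1) by (simp add: iso_def)
  have "\<phi> (m x y) = m' (\<phi> x) (\<phi> y)" if x: "x \<in> carrier G" and y: "y \<in> carrier G" for x y
  proof -
    have m_closed: "\<And>z. z \<in> carrier G \<Longrightarrow> m z \<one> \<in> carrier G"
      using interchange_op_decompose(1)[OF m] by (auto simp: idem_endo_def hom_def)
    have "\<phi> (m x y) = \<phi> (m x \<one> \<otimes> m y \<one>)" by (simp only: interchange_op_decompose(2)[OF m x y])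
    also have "\<dots> = m' (\<phi> x) \<one> \<otimes> m' (\<phi> y) \<one>"
      using \<phi>_hom m_closed x y \<phi>(2) by (simp add: hom_mult)
    also have "\<dots> = m' (\<phi> x) (\<phi> y)"
      using \<phi>_hom x y by (intro interchange_op_decompose(2)[OF m', symmetric]) (simp_all add: hom_in_carrier)
    finally show ?thesis .
  qed
  then show "interchange_iso G m m'" using \<phi>(1) by (auto simp: interchange_iso_def)
qed

text \<open>For groups with a basis over \<open>\<int>/p\<^sup>k\<close>, idempotents are classified up to conjugacy by the size
  of their image: diagonalize both and compare the numbers of fixed basis vectors.\<close>
lemma conjugate_iff_image_card:
  assumes p: "Factorial_Ring.prime p" and k: "k \<ge> 1" and bas: "is_basis G (p ^ k) a I"
    and e: "idem_endo G e" and e': "idem_endo G e'"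
  shows "conjugate G e e' \<longleftrightarrow> card (e ` carrier G) = card (e' ` carrier G)"
proof
  assume "conjugate G e e'"
  then show "card (e ` carrier G) = card (e' ` carrier G)"
    using conjugate_image_card e by (auto simp: idem_endo_def hom_def)
next
  assume same: "card (e ` carrier G) = card (e' ` carrier G)"
  have q: "1 < p ^ k" using one_less_power[OF prime_gt_1_nat[OF p], of k] k by simp
  have finI: "finite I" using basis_finite[OF bas] .
  obtain c where c: "is_basis G (p ^ k) c I" "diagonal G c I e"
    using idem_endo_diagonalizable[OF finI p refl k comm_group_axioms bas e] by blast
  obtain c' where c': "is_basis G (p ^ k) c' I" "diagonal G c' I e'"
    using idem_endo_diagonalizable[OF finI p refl k comm_group_axioms bas e'] by blast
  have e_hom: "e \<in> hom G G" and e'_hom: "e' \<in> hom G G" using e e' by (auto simp: idem_endo_def)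
  have "(p ^ k) ^ card {i\<in>I. e (c i) = c i} = (p ^ k) ^ card {i\<in>I. e' (c' i) = c' i}"
    using same diagonal_image_card[OF c(1) q e_hom c(2)] diagonal_image_card[OF c'(1) q e'_hom c'(2)]
    by simp
  then have "card {i\<in>I. e (c i) = c i} = card {i\<in>I. e' (c' i) = c' i}"
    using q by (simp add: power_inject_exp)
  then show "conjugate G e e'" by (rule diagonal_conjugate[OF c(1) c'(1) q e_hom c(2) e'_hom c'(2)])
qed

lemma idem_image_cards:
  assumes p: "Factorial_Ring.prime p" and k: "k \<ge> 1" and bas: "is_basis G (p ^ k) a I"
  shows "(\<lambda>e. card (e ` carrier G)) ` {e. idem_endo G e} = (\<lambda>s. (p ^ k) ^ s) ` {..card I}"
proof
  have q: "1 < p ^ k" using one_less_power[OF prime_gt_1_nat[OF p], of k] k by simp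
  have finI: "finite I" using basis_finite[OF bas] .
  show "(\<lambda>e. card (e ` carrier G)) ` {e. idem_endo G e} \<subseteq> (\<lambda>s. (p ^ k) ^ s) ` {..card I}"
  proof (rule image_subsetI)
    fix e assume "e \<in> {e. idem_endo G e}"
    then have e: "idem_endo G e" by simp
    obtain c where c: "is_basis G (p ^ k) c I" "diagonal G c I e"
      using idem_endo_diagonalizable[OF finI p refl k comm_group_axioms bas e] by blast
    have "card (e ` carrier G) = (p ^ k) ^ card {i\<in>I. e (c i) = c i}"
      using diagonal_image_card[OF c(1) q _ c(2)] e by (simp add: idem_endo_def)
    moreover have "card {i\<in>I. e (c i) = c i} \<in> {..card I}" using finI by (simp add: card_mono)
    ultimately show "card (e ` carrier G) \<in> (\<lambda>s. (p ^ k) ^ s) ` {..card I}" by (rule image_eqI)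
  qed
  show "(\<lambda>s. (p ^ k) ^ s) ` {..card I} \<subseteq> (\<lambda>e. card (e ` carrier G)) ` {e. idem_endo G e}"
  proof (rule image_subsetI)
    fix s assume "s \<in> {..card I}"
    then obtain T where T: "T \<subseteq> I" "card T = s"
      using obtain_subset_with_card_n[of s I] by auto
    obtain e where e: "idem_endo G e" "diagonal G a I e" "{i\<in>I. e (a i) = a i} = T"
      using idem_endo_with_support[OF bas q T(1)] by blast
    have "card (e ` carrier G) = (p ^ k) ^ s"
      using diagonal_image_card[OF bas q _ e(2)] e(1,3) T(2) by (simp add: idem_endo_def)
    moreover have "e \<in> {e. idem_endo G e}" using e(1) by simp
    ultimately show "(p ^ k) ^ s \<in> (\<lambda>e. card (e ` carrier G)) ` {e. idem_endo G e}"
      by (rule image_eqI[OF sym])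
  qed
qed

lemma count_interchange_classes:
  assumes p: "Factorial_Ring.prime p" and k: "k \<ge> 1" and bas: "is_basis G (p ^ k) a I"
  shows "card (comm_assoc_interchange_ops G //
                 {(m, m'). m \<in> comm_assoc_interchange_ops G \<and> m' \<in> comm_assoc_interchange_ops G
                           \<and> interchange_iso G m m'}) = card I + 1"
proof -
  define Ops where "Ops = comm_assoc_interchange_ops G"
  define size where "size m = card ((\<lambda>x. m x \<one>) ` carrier G)" for m :: "'a \<Rightarrow> 'a \<Rightarrow> 'a"
  have q: "1 < p ^ k" using one_less_power[OF prime_gt_1_nat[OF p], of k] k by simp
  have "interchange_iso G m m' \<longleftrightarrow> size m = size m'" if "m \<in> Ops" "m' \<in> Ops" for m m'
    using that interchange_iso_iff_conjugate conjugate_iff_image_card[OF p k bas]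
      interchange_op_decompose(1) by (simp add: Ops_def size_def)
  then have "{(m, m'). m \<in> Ops \<and> m' \<in> Ops \<and> interchange_iso G m m'}
           = {(m, m'). m \<in> Ops \<and> m' \<in> Ops \<and> size m = size m'}" by auto
  then have "card (Ops // {(m, m'). m \<in> Ops \<and> m' \<in> Ops \<and> interchange_iso G m m'}) = card (size ` Ops)"
    by (simp add: card_quotient_invariant)
  also have "size ` Ops = (\<lambda>e. card (e ` carrier G)) ` {e. idem_endo G e}"
  proof
    show "size ` Ops \<subseteq> (\<lambda>e. card (e ` carrier G)) ` {e. idem_endo G e}"
      using interchange_op_decompose(1) by (auto simp: Ops_def size_def)
    show "(\<lambda>e. card (e ` carrier G)) ` {e. idem_endo G e} \<subseteq> size ` Ops"
    proof (rule image_subsetI)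
      fix e assume "e \<in> {e. idem_endo G e}"
      then have e: "idem_endo G e" by simp
      then have "e \<one> = \<one>" using hom_one[of e G G] is_group by (simp add: idem_endo_def)
      then have "size (\<lambda>x y. e x \<otimes> e y) = card (e ` carrier G)"
        using e by (simp add: size_def idem_endo_def hom_def Pi_iff)
      moreover have "(\<lambda>x y. e x \<otimes> e y) \<in> Ops"
        using interchange_op_of_idem_endo[OF e] by (simp add: Ops_def)
      ultimately show "card (e ` carrier G) \<in> size ` Ops" by (rule image_eqI[OF sym])
    qed
  qed
  also have "\<dots> = (\<lambda>s. (p ^ k) ^ s) ` {..card I}" by (rule idem_image_cards[OF p k bas])
  also have "card \<dots> = card I + 1"
    using q by (subst card_image) (auto simp: inj_on_def power_inject_exp)
  finally show ?thesis by (simp add: Ops_def)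
qed

end

abbreviation cyclic_power :: "nat \<Rightarrow> nat set \<Rightarrow> (nat \<Rightarrow> int) monoid" where
  "cyclic_power q I \<equiv> product_group I (\<lambda>_. integer_mod_group q)"

lemma cyclic_power_comm_group: "comm_group (cyclic_power q I)"
proof -
  interpret group "cyclic_power q I" by (rule product_group) simp
  show ?thesis
  proof (rule group_comm_groupI)
    fix x y assume "x \<in> carrier (cyclic_power q I)" "y \<in> carrier (cyclic_power q I)"
    show "x \<otimes>\<^bsub>cyclic_power q I\<^esub> y = y \<otimes>\<^bsub>cyclic_power q I\<^esub> x" by (simp add: add.commute)
  qed
qed

lemma cyclic_power_pow:
  assumes "y \<in> carrier (cyclic_power q I)"
  shows "y [^]\<^bsub>cyclic_power q I\<^esub> (m::nat) = (\<lambda>k\<in>I. (int m * y k) mod int q)"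
proof (induct m)
  case 0 then show ?case by simp
next
  case (Suc m)
  interpret comm_group "cyclic_power q I" by (rule cyclic_power_comm_group)
  have "y [^]\<^bsub>cyclic_power q I\<^esub> Suc m = y [^]\<^bsub>cyclic_power q I\<^esub> m \<otimes>\<^bsub>cyclic_power q I\<^esub> y" by simp
  also have "\<dots> = (\<lambda>k\<in>I. (int (Suc m) * y k) mod int q)"
    using Suc by (auto simp: fun_eq_iff mod_add_right_eq algebra_simps)
  finally show ?case .
qed

definition std_basis :: "nat set \<Rightarrow> nat \<Rightarrow> nat \<Rightarrow> int" where
  "std_basis I i = (\<lambda>k\<in>I. if k = i then 1 else 0)"

lemma std_basis_carrier: "1 < q \<Longrightarrow> i \<in> I \<Longrightarrow> std_basis I i \<in> carrier (cyclic_power q I)"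
  by (auto simp: std_basis_def carrier_integer_mod_group)

lemma lincomb_std_basis:
  assumes "1 < q" "finite J" "J \<subseteq> I"
  shows "lincomb (cyclic_power q I) (std_basis I) v J = (\<lambda>k\<in>I. if k \<in> J then int (v k) mod int q else 0)"
  using assms(2,3)
proof (induct J rule: finite_induct)
  case empty
  interpret comm_group "cyclic_power q I" by (rule cyclic_power_comm_group)
  show ?case by (simp add: lincomb_def)
next
  case (insert j J)
  interpret comm_group "cyclic_power q I" by (rule cyclic_power_comm_group)
  have dI: "std_basis I \<in> insert j J \<rightarrow> carrier (cyclic_power q I)" using insert assms(1) std_basis_carrier by auto
  have "lincomb (cyclic_power q I) (std_basis I) v (insert j J) = std_basis I j [^]\<^bsub>cyclic_power q I\<^esub> v j \<otimes>\<^bsub>cyclic_power q I\<^esub> lincomb (cyclic_power q I) (std_basis I) v J"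
    using insert dI by (intro lincomb_insert) auto
  also have "\<dots> = (\<lambda>k\<in>I. if k \<in> insert j J then int (v k) mod int q else 0)"
  proof -
    have jI: "j \<in> I" using insert by auto
    have pw: "std_basis I j [^]\<^bsub>cyclic_power q I\<^esub> v j = (\<lambda>k\<in>I. if k = j then int (v j) mod int q else 0)"
      using cyclic_power_pow[OF std_basis_carrier[OF assms(1) jI]] by (auto simp: std_basis_def fun_eq_iff)
    have IH: "lincomb (cyclic_power q I) (std_basis I) v J = (\<lambda>k\<in>I. if k \<in> J then int (v k) mod int q else 0)"
      using insert by auto
    show ?thesis unfolding pw IH using insert(2) by (auto simp: fun_eq_iff)
  qed
  finally show ?case .
qed

text \<open>The unit vectors form a basis: the coefficient map is the inclusion \<open>{..<q}\<^sup>I \<subseteq> (\<int>/q)\<^sup>I\<close>.\<close>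
lemma cyclic_power_basis:
  assumes "1 < q" "finite I"
  shows "is_basis (cyclic_power q I) q (std_basis I) I"
proof -
  interpret comm_group "cyclic_power q I" by (rule cyclic_power_comm_group)
  have q0: "0 < q" using assms by simp
  have dI: "std_basis I \<in> I \<rightarrow> carrier (cyclic_power q I)" using assms(1) std_basis_carrier by auto
  have exp: "\<forall>x\<in>carrier (cyclic_power q I). x [^]\<^bsub>cyclic_power q I\<^esub> q = \<one>\<^bsub>cyclic_power q I\<^esub>"
    using cyclic_power_pow by (auto simp: fun_eq_iff)
  have lcv: "lincomb (cyclic_power q I) (std_basis I) v I = (\<lambda>k\<in>I. int (v k))" if "v \<in> coeff_vectors q I" for v
    using lincomb_std_basis[OF assms(1) assms(2) subset_refl, of v] that by (auto simp: coeff_vectors_def PiE_iff fun_eq_iff)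
  have "bij_betw (\<lambda>v. \<lambda>k\<in>I. int (v k)) (coeff_vectors q I) (carrier (cyclic_power q I))"
  proof (rule bij_betw_byWitness[where f' = "\<lambda>y. \<lambda>k\<in>I. nat (y k)"])
    show "\<forall>a\<in>coeff_vectors q I. (\<lambda>k\<in>I. nat ((\<lambda>k\<in>I. int (a k)) k)) = a"
    proof
      fix a assume a: "a \<in> coeff_vectors q I"
      then have ext: "a \<in> extensional I" by (simp add: coeff_vectors_def PiE_iff)
      show "(\<lambda>k\<in>I. nat ((\<lambda>k\<in>I. int (a k)) k)) = a"
        by (rule extensionalityI[OF restrict_extensional ext]) simp
    qed
    show "\<forall>a'\<in>carrier (cyclic_power q I). (\<lambda>k\<in>I. int ((\<lambda>k\<in>I. nat (a' k)) k)) = a'"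
    proof
      fix a assume a: "a \<in> carrier (cyclic_power q I)"
      then have ext: "a \<in> extensional I" and nn: "\<forall>k\<in>I. 0 \<le> a k"
        using q0 by (auto simp: PiE_iff carrier_integer_mod_group)
      show "(\<lambda>k\<in>I. int ((\<lambda>k\<in>I. nat (a k)) k)) = a"
        by (rule extensionalityI[OF restrict_extensional ext]) (simp add: nn)
    qed
    show "(\<lambda>v. \<lambda>k\<in>I. int (v k)) ` coeff_vectors q I \<subseteq> carrier (cyclic_power q I)"
      using q0 by (auto simp: carrier_integer_mod_group coeff_vectors_def PiE_iff)
    show "(\<lambda>y. \<lambda>k\<in>I. nat (y k)) ` carrier (cyclic_power q I) \<subseteq> coeff_vectors q I"
      using q0 by (auto simp: carrier_integer_mod_group coeff_vectors_def PiE_iff nat_less_iff)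
  qed
  then have "bij_betw (\<lambda>v. lincomb (cyclic_power q I) (std_basis I) v I) (coeff_vectors q I) (carrier (cyclic_power q I))"
    by (rule bij_betw_cong[THEN iffD1, rotated]) (simp add: lcv)
  then show ?thesis using assms dI exp by (simp add: is_basis_def)
qed

lemma basis_transfer:
  assumes A: "comm_group A" and B: "comm_group B" and h: "h \<in> iso A B" and bas: "is_basis A q b I"
  shows "is_basis B q (\<lambda>i. h (b i)) I"
proof -
  interpret A: comm_group A by fact
  interpret B: comm_group B by fact
  have hh: "h \<in> hom A B" using h by (simp add: iso_def)
  interpret gh: group_hom A B h using hh A.is_group B.is_group
    by (simp add: group_hom_def group_hom_axioms_def)
  have finI: "finite I" and bI: "b \<in> I \<rightarrow> carrier A" using bas by (auto simp: is_basis_def)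
  have lch: "lincomb B (\<lambda>i. h (b i)) v I = h (lincomb A b v I)" for v
    using A.lincomb_hom[OF B hh finI bI] by simp
  have hbij: "bij_betw h (carrier A) (carrier B)" using h by (simp add: iso_def)
  have "bij_betw (h \<circ> (\<lambda>v. lincomb A b v I)) (coeff_vectors q I) (carrier B)"
    using bij_betw_trans[OF A.basis_bij[OF bas] hbij] .
  then have bij: "bij_betw (\<lambda>v. lincomb B (\<lambda>i. h (b i)) v I) (coeff_vectors q I) (carrier B)"
    by (rule bij_betw_cong[THEN iffD1, rotated]) (simp add: lch)
  have exp: "\<forall>y\<in>carrier B. y [^]\<^bsub>B\<^esub> q = \<one>\<^bsub>B\<^esub>"
  proof
    fix y assume "y \<in> carrier B"
    then obtain x where x: "x \<in> carrier A" "y = h x" using hbij by (auto simp: bij_betw_def)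
    then have "y [^]\<^bsub>B\<^esub> q = h (x [^]\<^bsub>A\<^esub> q)" by (simp add: gh.hom_nat_pow)
    also have "\<dots> = \<one>\<^bsub>B\<^esub>" using A.basis_exponent[OF bas x(1)] by simp
    finally show "y [^]\<^bsub>B\<^esub> q = \<one>\<^bsub>B\<^esub>" .
  qed
  have "(\<lambda>i. h (b i)) \<in> I \<rightarrow> carrier B" using bI gh.hom_closed by (auto simp: Pi_iff)
  then show ?thesis using finI bij exp by (simp add: is_basis_def)
qed

text \<open>The main theorem: an elementary abelian \<open>p\<^sup>n\<close>-group of ppc-rank \<open>r\<close> carries exactly \<open>r + 1\<close>
  commutative associative interchange ring structures up to isomorphism. (The argument does not
  need the hypothesis \<open>r \<ge> 1\<close>.)\<close>
theorem corollary6p4: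
  fixes G :: "('a, 'b) monoid_scheme" and p n r :: nat
  assumes "Factorial_Ring.prime p" and "n \<ge> 1" and "r \<ge> 1"
    and "elem_abelian_ppc G p n r"
  shows "card (comm_assoc_interchange_ops G //
                 {(m, m'). m \<in> comm_assoc_interchange_ops G \<and> m' \<in> comm_assoc_interchange_ops G
                           \<and> interchange_iso G m m'}) = r + 1"
proof -
  have G: "comm_group G" and "G \<cong> cyclic_power (p ^ n) {..<r}"
    using assms(4) by (simp_all add: elem_abelian_ppc_def)
  then obtain h0 where "h0 \<in> iso G (cyclic_power (p ^ n) {..<r})" by (auto simp: is_iso_def)
  then have h: "inv_into (carrier G) h0 \<in> iso (cyclic_power (p ^ n) {..<r}) G"
    by (rule group.iso_set_sym[OF comm_group.axioms(2)[OF G]])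
  have q: "1 < p ^ n" using one_less_power[OF prime_gt_1_nat[OF assms(1)], of n] assms(2) by simp
  have "is_basis G (p ^ n) (\<lambda>i. inv_into (carrier G) h0 (std_basis {..<r} i)) {..<r}"
    using basis_transfer[OF cyclic_power_comm_group G h cyclic_power_basis[OF q]] by simp
  then show ?thesis using comm_group.count_interchange_classes[OF G assms(1,2)] by simp
qed

end
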